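(* Given an arbitrary sequence of instances $\{\mathcal{I}_N\}_{N=1}^{\infty}$ and an arbitrary regular strategy profile sequence $\{\Sigma_{N}\}_{N=1}^{\infty}$, let $\{A(\Sigma_{N})\}_{N=1}^{\infty}$ be the sequence of the fidelities of $\Sigma_N$. (1) If $\lim_{N\to \infty} A(\Sigma_{N}) = 1$, then for every $N$, $\Sigma_{N}$ is an $\varepsilon$-strong Bayes Nash Equilibrium with $\varepsilon = o(1)$. (2) If $\lim_{N\to \infty} A(\Sigma_{N}) = 1$ does not hold, then there exist infinitely many $N$ such that $\Sigma_{N}$ is NOT an $\varepsilon$-strong Bayes Nash Equilibrium for some constant $\varepsilon>0$.
   Context: Binary voting model. $N$ agents vote for one of two alternatives $\mathbf{A}$ (accept) and $\mathbf{R}$ (reject). There are two world states $L,H$ with common prior $P_L=\Pr[W=L]>0$, $P_H=\Pr[W=H]>0$; the state is not observed. Each agent receives a private signal in $\{l,h\}$, i.i.d. conditioned on the state, with $P_{sw}=\Pr[\text{signal}=s\mid W=w]$ common knowledge and $P_{hH}>P_{hL}$, $P_{lH}<P_{lL}$. Majority vote with threshold $\mu$: $\mathbf{A}$ wins iff at least $\mu N$ agents vote for $\mathbf{A}$. Each agent $n$ has utility $v_n:\{L,H\}\times\{\mathbf{A},\mathbf{R}\}\to\{0,1,\dots,B\}$ ($B$ a positive integer) with $v_n(H,\mathbf{A})>v_n(L,\mathbf{A})$ and $v_n(H,\mathbf{R})<v_n(L,\mathbf{R})$. Friendly agents satisfy $v_n(H,\mathbf{A})>v_n(L,\mathbf{A})>v_n(L,\mathbf{R})>v_n(H,\mathbf{R})$;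 unfriendly agents satisfy $v_n(L,\mathbf{R})>v_n(H,\mathbf{R})>v_n(H,\mathbf{A})>v_n(L,\mathbf{A})$; contingent agents satisfy $v_n(H,\mathbf{A})>v_n(H,\mathbf{R})$ and $v_n(L,\mathbf{R})>v_n(L,\mathbf{A})$. There are $\lfloor\alpha_F N\rfloor$ friendly, $\lfloor\alpha_U N\rfloor$ unfriendly and the rest contingent agents, with $\alpha_F,\alpha_U,\alpha_C$ fixed and common knowledge; neither friendly nor unfriendly agents alone can determine the outcome, so the informed majority decision is $\mathbf{A}$ in state $H$ and $\mathbf{R}$ in state $L$. A (mixed) strategy maps the signal to a probability of voting $\mathbf{A}$; a strategy profile is regular if all friendly agents always vote $\mathbf{A}$ and all unfriendly agents always vote $\mathbf{R}$. With $\lambda_w^{\mathbf{A}}(\Sigma)$, $\lambda_w^{\mathbf{R}}(\Sigma)$ the ex-ante probabilities that $\mathbf{A}$, resp. $\mathbf{R}$, wins in state $w$, the fidelity is $A(\Sigma)=P_L\lambda_L^{\mathbf{R}}(\Sigma)+P_H\lambda_H^{\mathbf{A}}(\Sigma)$ and the ex-ante expected utility is $u_n(\Sigma)=\sum_{w\in\{L,H\}}P_w(\lambda_w^{\mathbf{A}}(\Sigma)v_n(w,\mathbf{A})+\lambda_w^{\mathbf{R}}(\Sigma)v_n(w,\mathbf{R}))$. A sequence of instances $\{\mathcal{I}_N\}$ shares $\mu$, prior, signal distribution and type fractions (utilities may vary arbitrarily with $N$); $\Sigma_N$ is a profile in $\mathcal{I}_N$. A profile $\Sigma$ is an $\varepsilon$-strong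 Bayes Nash Equilibrium if there is no coalition $D$ and profile $\Sigma'$ agreeing with $\Sigma$ outside $D$ such that $u_n(\Sigma')\ge u_n(\Sigma)$ for all $n\in D$ and $u_n(\Sigma')>u_n(\Sigma)+\varepsilon$ for some $n\in D$. *)

theory Defs
  imports Complex_Main
begin

datatype state = L | H
datatype outcome = Acc | Rej
datatype signal = Sl | Sh

text \<open>Agents of the instance with N agents are 0..N-1.
  A (mixed) strategy profile is a function \<open>nat \<Rightarrow> signal \<Rightarrow> real\<close> giving each agent's
  probability of voting Accept after each signal.
  Signal distribution: \<open>P s w\<close> = Pr[signal = s | W = w].\<close>

definition valid_profile :: "nat \<Rightarrow> (nat \<Rightarrow> signal \<Rightarrow> real) \<Rightarrow> bool" where
  "valid_profile N \<sigma> \<longleftrightarrow> (\<forall>n<N. \<forall>s. 0 \<le> \<sigma> n s \<and> \<sigma> n s \<le> 1)"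

definition friendly :: "(state \<Rightarrow> outcome \<Rightarrow> nat) \<Rightarrow> bool" where
  "friendly v \<longleftrightarrow> v H Acc > v L Acc \<and> v L Acc > v L Rej \<and> v L Rej > v H Rej"

definition unfriendly :: "(state \<Rightarrow> outcome \<Rightarrow> nat) \<Rightarrow> bool" where
  "unfriendly v \<longleftrightarrow> v L Rej > v H Rej \<and> v H Rej > v H Acc \<and> v H Acc > v L Acc"

definition contingent :: "(state \<Rightarrow> outcome \<Rightarrow> nat) \<Rightarrow> bool" where
  "contingent v \<longleftrightarrow> v H Acc > v H Rej \<and> v L Rej > v L Acc"

definition vote_prob :: "(signal \<Rightarrow> state \<Rightarrow> real) \<Rightarrow> (nat \<Rightarrow> signal \<Rightarrow> real) \<Rightarrow> nat \<Rightarrow> state \<Rightarrow> real" where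
  "vote_prob P \<sigma> n w = P Sh w * \<sigma> n Sh + P Sl w * \<sigma> n Sl"

definition lamA :: "nat \<Rightarrow> real \<Rightarrow> (signal \<Rightarrow> state \<Rightarrow> real) \<Rightarrow> (nat \<Rightarrow> signal \<Rightarrow> real) \<Rightarrow> state \<Rightarrow> real" where
  "lamA N \<mu> P \<sigma> w =
     (\<Sum>S\<in>{S. S \<subseteq> {..<N} \<and> real (card S) \<ge> \<mu> * real N}.
        (\<Prod>n\<in>S. vote_prob P \<sigma> n w) * (\<Prod>n\<in>{..<N} - S. 1 - vote_prob P \<sigma> n w))"

definition lamR :: "nat \<Rightarrow> real \<Rightarrow> (signal \<Rightarrow> state \<Rightarrow> real) \<Rightarrow> (nat \<Rightarrow> signal \<Rightarrow> real) \<Rightarrow> state \<Rightarrow> real" where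
  "lamR N \<mu> P \<sigma> w = 1 - lamA N \<mu> P \<sigma> w"

definition fidelity :: "nat \<Rightarrow> real \<Rightarrow> (state \<Rightarrow> real) \<Rightarrow> (signal \<Rightarrow> state \<Rightarrow> real) \<Rightarrow> (nat \<Rightarrow> signal \<Rightarrow> real) \<Rightarrow> real" where
  "fidelity N \<mu> pr P \<sigma> = pr L * lamR N \<mu> P \<sigma> L + pr H * lamA N \<mu> P \<sigma> H"

definition exp_util :: "nat \<Rightarrow> real \<Rightarrow> (state \<Rightarrow> real) \<Rightarrow> (signal \<Rightarrow> state \<Rightarrow> real)
    \<Rightarrow> (state \<Rightarrow> outcome \<Rightarrow> nat) \<Rightarrow> (nat \<Rightarrow> signal \<Rightarrow> real) \<Rightarrow> real" where
  "exp_util N \<mu> pr P vn \<sigma> =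
     (\<Sum>w\<in>{L, H}. pr w * (lamA N \<mu> P \<sigma> w * real (vn w Acc) + lamR N \<mu> P \<sigma> w * real (vn w Rej)))"

definition regular :: "nat \<Rightarrow> (nat \<Rightarrow> state \<Rightarrow> outcome \<Rightarrow> nat) \<Rightarrow> (nat \<Rightarrow> signal \<Rightarrow> real) \<Rightarrow> bool" where
  "regular N v \<sigma> \<longleftrightarrow> valid_profile N \<sigma> \<and>
     (\<forall>n<N. friendly (v n) \<longrightarrow> (\<forall>s. \<sigma> n s = 1)) \<and>
     (\<forall>n<N. unfriendly (v n) \<longrightarrow> (\<forall>s. \<sigma> n s = 0))"

definition strong_BNE :: "nat \<Rightarrow> real \<Rightarrow> (state \<Rightarrow> real) \<Rightarrow> (signal \<Rightarrow> state \<Rightarrow> real)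
    \<Rightarrow> (nat \<Rightarrow> state \<Rightarrow> outcome \<Rightarrow> nat) \<Rightarrow> (nat \<Rightarrow> signal \<Rightarrow> real) \<Rightarrow> real \<Rightarrow> bool" where
  "strong_BNE N \<mu> pr P v \<sigma> \<epsilon> \<longleftrightarrow>
     \<not> (\<exists>D \<sigma>'. D \<subseteq> {..<N} \<and> valid_profile N \<sigma>' \<and> (\<forall>n<N. n \<notin> D \<longrightarrow> \<sigma>' n = \<sigma> n) \<and>
          (\<forall>n\<in>D. exp_util N \<mu> pr P (v n) \<sigma>' \<ge> exp_util N \<mu> pr P (v n) \<sigma>) \<and>
          (\<exists>n\<in>D. exp_util N \<mu> pr P (v n) \<sigma>' > exp_util N \<mu> pr P (v n) \<sigma> + \<epsilon>))"

definition is_instance :: "nat \<Rightarrow> nat \<Rightarrow> real \<Rightarrow> real \<Rightarrow> (nat \<Rightarrow> state \<Rightarrow> outcome \<Rightarrow> nat) \<Rightarrow> bool" where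
  "is_instance N B \<alpha>F \<alpha>U v \<longleftrightarrow>
     (\<forall>n<N. \<forall>w a. v n w a \<le> B) \<and>
     (\<forall>n<N. v n H Acc > v n L Acc \<and> v n H Rej < v n L Rej) \<and>
     (\<forall>n<N. friendly (v n) \<or> unfriendly (v n) \<or> contingent (v n)) \<and>
     card {n. n < N \<and> friendly (v n)} = nat \<lfloor>\<alpha>F * real N\<rfloor> \<and>
     card {n. n < N \<and> unfriendly (v n)} = nat \<lfloor>\<alpha>U * real N\<rfloor>"

end

theory Submission
  imports Defs
begin

text \<open>
  Part (1). Let a coalition deviate from a regular profile. The gain of each member is
  \<open>X dL + Y dH\<close>, where \<open>dL, dH\<close> are its utility gaps between Accept and Reject in the two
  states and \<open>X, Y\<close> are the prior-weighted shifts of the acceptance probabilities; these obey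
  \<open>-a \<le> X\<close>, \<open>Y \<le> b\<close> for the two error terms with \<open>a + b = 1 - fidelity\<close>. Friendly and
  unfriendly agents already vote deterministically, so a coalition of friendly (unfriendly)
  agents alone can only lower (raise) acceptance; a profitable deviation of such an agent
  therefore needs a weakly profiting partner of another type, and a case analysis bounds
  every gain by \<open>(B + B\<^sup>2) (1 - fidelity)\<close>.

  Part (2). The contingent agents can mix so that the expected number of Accept votes
  exceeds \<open>\<mu> N\<close> by a linear margin in state \<open>H\<close> and falls short of it in state \<open>L\<close>. By
  Chebyshev's inequality the vote then follows the informed majority with probability
  \<open>1 - O(1/N)\<close>, so each contingent agent gains about \<open>1 - fidelity\<close>, which stays away from
  \<open>0\<close> infinitely often.
\<close>

text \<open>Independent trials indexed by \<open>A\<close> succeed with probabilities \<open>p\<close>: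
  \<open>pb_weight A p S\<close> is the probability that exactly the trials in \<open>S\<close> succeed, and
  \<open>pb_expect A p h\<close> is the expectation of \<open>h\<close> applied to the number of successes.\<close>

definition pb_weight :: "nat set \<Rightarrow> (nat \<Rightarrow> real) \<Rightarrow> nat set \<Rightarrow> real" where
  "pb_weight A p S = (\<Prod>i\<in>S. p i) * (\<Prod>i\<in>A - S. 1 - p i)"

definition pb_expect :: "nat set \<Rightarrow> (nat \<Rightarrow> real) \<Rightarrow> (nat \<Rightarrow> real) \<Rightarrow> real" where
  "pb_expect A p h = (\<Sum>S\<in>Pow A. pb_weight A p S * h (card S))"

lemma pb_expect_empty [simp]: "pb_expect {} p h = h 0"
  unfolding pb_expect_def pb_weight_def by simp

lemma pb_expect_insert:
  assumes "finite A" "x \<notin> A"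
  shows "pb_expect (insert x A) p h = p x * pb_expect A p (\<lambda>c. h (Suc c)) + (1 - p x) * pb_expect A p h"
proof -
  have fin: "finite S" if "S \<in> Pow A" for S
    using that assms(1) finite_subset by auto
  have without_x: "pb_weight (insert x A) p S = (1 - p x) * pb_weight A p S" if "S \<in> Pow A" for S
  proof -
    have "insert x A - S = insert x (A - S)" using assms that by auto
    then show ?thesis unfolding pb_weight_def using assms that by (simp add: mult_ac)
  qed
  have with_x: "pb_weight (insert x A) p (insert x S) = p x * pb_weight A p S" if "S \<in> Pow A" for S
  proof -
    have "insert x A - insert x S = A - S" "x \<notin> S" using assms that by auto
    then show ?thesis unfolding pb_weight_def using fin[OF that] by (simp add: mult_ac)
  qed
  have "pb_expect (insert x A) p h = (\<Sum>S\<in>Pow A. pb_weight (insert x A) p S * h (card S)) +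
        (\<Sum>S\<in>insert x ` Pow A. pb_weight (insert x A) p S * h (card S))"
    unfolding pb_expect_def Pow_insert by (rule sum.union_disjoint) (use assms in auto)
  also have "(\<Sum>S\<in>insert x ` Pow A. pb_weight (insert x A) p S * h (card S)) =
        (\<Sum>S\<in>Pow A. pb_weight (insert x A) p (insert x S) * h (card (insert x S)))"
    by (subst sum.reindex) (use assms in \<open>auto intro!: inj_onI\<close>)
  also have "\<dots> = (\<Sum>S\<in>Pow A. p x * (pb_weight A p S * h (Suc (card S))))"
  proof (rule sum.cong)
    fix S assume S: "S \<in> Pow A"
    have "x \<notin> S" using assms S by blast
    then have "card (insert x S) = Suc (card S)" using fin[OF S] by simp
    then show "pb_weight (insert x A) p (insert x S) * h (card (insert x S)) =
        p x * (pb_weight A p S * h (Suc (card S)))" using with_x[OF S] by simp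
  qed simp
  finally show ?thesis
    unfolding pb_expect_def using without_x by (simp add: sum_distrib_left mult_ac)
qed

lemma pb_expect_const: "finite A \<Longrightarrow> pb_expect A p (\<lambda>_. k) = k"
  by (induction A rule: finite_induct) (simp_all add: pb_expect_insert algebra_simps)

lemma pb_expect_add: "pb_expect A p (\<lambda>c. f c + g c) = pb_expect A p f + pb_expect A p g"
  unfolding pb_expect_def by (simp add: algebra_simps sum.distrib)

lemma pb_expect_diff: "pb_expect A p (\<lambda>c. f c - g c) = pb_expect A p f - pb_expect A p g"
  unfolding pb_expect_def by (simp add: algebra_simps sum_subtractf)

lemma pb_expect_cmult: "pb_expect A p (\<lambda>c. a * f c) = a * pb_expect A p f"
  unfolding pb_expect_def by (simp add: sum_distrib_left mult_ac)

lemma pb_expect_mono: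
  assumes "\<And>i. i \<in> A \<Longrightarrow> 0 \<le> p i \<and> p i \<le> 1" "\<And>c. f c \<le> g c"
  shows "pb_expect A p f \<le> pb_expect A p g"
  unfolding pb_expect_def pb_weight_def
  by (intro sum_mono mult_left_mono mult_nonneg_nonneg prod_nonneg) (use assms in auto)

lemma pb_expect_mono_prob:
  assumes "finite A" "\<And>i. i \<in> A \<Longrightarrow> 0 \<le> q i \<and> q i \<le> p i \<and> p i \<le> 1" "mono h"
  shows "pb_expect A q h \<le> pb_expect A p h"
  using assms
proof (induction A arbitrary: h rule: finite_induct)
  case (insert x A)
  let ?h' = "\<lambda>c. h (Suc c)"
  have probs: "\<And>i. i \<in> A \<Longrightarrow> 0 \<le> q i \<and> q i \<le> p i \<and> p i \<le> 1" using insert.prems by auto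
  then have p_probs: "\<And>i. i \<in> A \<Longrightarrow> 0 \<le> p i \<and> p i \<le> 1" by (meson order_trans)
  have "mono ?h'" using insert.prems(2) by (simp add: mono_def)
  then have shifted: "pb_expect A q ?h' \<le> pb_expect A p ?h'" using insert.IH probs by blast
  have unshifted: "pb_expect A q h \<le> pb_expect A p h" using insert.IH probs insert.prems by blast
  have step: "pb_expect A p h \<le> pb_expect A p ?h'"
    using p_probs insert.prems(2) by (intro pb_expect_mono) (auto simp: mono_def)
  have qx: "0 \<le> q x" "q x \<le> p x" "p x \<le> 1" using insert.prems(1) by auto
  have "pb_expect (insert x A) q h = q x * pb_expect A q ?h' + (1 - q x) * pb_expect A q h"
    using insert.hyps by (rule pb_expect_insert)
  also have "\<dots> \<le> q x * pb_expect A p ?h' + (1 - q x) * pb_expect A p h"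
    using qx by (intro add_mono mult_left_mono shifted unshifted) auto
  also have "\<dots> = pb_expect A p h + q x * (pb_expect A p ?h' - pb_expect A p h)"
    by (simp add: algebra_simps)
  also have "\<dots> \<le> pb_expect A p h + p x * (pb_expect A p ?h' - pb_expect A p h)"
    using qx step by (intro add_left_mono mult_right_mono) auto
  also have "\<dots> = p x * pb_expect A p ?h' + (1 - p x) * pb_expect A p h"
    by (simp add: algebra_simps)
  also have "\<dots> = pb_expect (insert x A) p h"
    using insert.hyps by (rule pb_expect_insert[symmetric])
  finally show ?case .
qed simp

lemma pb_expect_count: "finite A \<Longrightarrow> pb_expect A p real = (\<Sum>i\<in>A. p i)"
  by (induction A rule: finite_induct) (simp_all add: pb_expect_insert pb_expect_add pb_expect_const algebra_simps)

lemma pb_expect_count_sq: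
  "finite A \<Longrightarrow> pb_expect A p (\<lambda>c. real c ^ 2) = (\<Sum>i\<in>A. p i)\<^sup>2 + (\<Sum>i\<in>A. p i * (1 - p i))"
proof (induction A rule: finite_induct)
  case (insert x A)
  have "(\<lambda>c. real (Suc c) ^ 2) = (\<lambda>c. real c ^ 2 + (2 * real c + 1))"
    by (simp add: power2_eq_square algebra_simps)
  then have "pb_expect A p (\<lambda>c. real (Suc c) ^ 2) =
      pb_expect A p (\<lambda>c. real c ^ 2) + pb_expect A p (\<lambda>c. 2 * real c + 1)"
    by (simp only: pb_expect_add)
  also have "pb_expect A p (\<lambda>c. 2 * real c + 1) = 2 * (\<Sum>i\<in>A. p i) + 1"
    using insert.hyps by (simp add: pb_expect_add pb_expect_cmult pb_expect_count pb_expect_const)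
  finally have "pb_expect (insert x A) p (\<lambda>c. real c ^ 2) =
      pb_expect A p (\<lambda>c. real c ^ 2) + p x * (2 * (\<Sum>i\<in>A. p i) + 1)"
    using insert.hyps by (simp add: pb_expect_insert algebra_simps)
  then show ?case
    using insert by (simp add: power2_eq_square algebra_simps)
qed simp

lemma pb_expect_variance:
  assumes "finite A"
  shows "pb_expect A p (\<lambda>c. (real c - (\<Sum>i\<in>A. p i))\<^sup>2) = (\<Sum>i\<in>A. p i * (1 - p i))"
proof -
  define m where "m = (\<Sum>i\<in>A. p i)"
  have "(\<lambda>c. (real c - m)\<^sup>2) = (\<lambda>c. (real c ^ 2 + m\<^sup>2) - 2 * m * real c)"
    by (simp add: power2_eq_square algebra_simps)
  then show ?thesis
    using assms pb_expect_count_sq[OF assms, of p] unfolding m_def[symmetric]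
    by (simp add: pb_expect_diff pb_expect_add pb_expect_cmult pb_expect_count pb_expect_const m_def
        power2_eq_square)
qed

lemma pb_expect_le_variance:
  assumes "finite A" "\<And>i. i \<in> A \<Longrightarrow> 0 \<le> p i \<and> p i \<le> 1"
    and "\<And>c. g c \<le> (real c - (\<Sum>i\<in>A. p i))\<^sup>2"
  shows "pb_expect A p g \<le> (\<Sum>i\<in>A. p i * (1 - p i))"
  using pb_expect_mono[of A p g, OF assms(2,3)] pb_expect_variance[OF assms(1), of p] by simp

lemma vote_prob_bounds:
  assumes "\<And>s w. 0 \<le> P s w" "\<And>w. P Sh w + P Sl w = 1" "valid_profile N \<sigma>" "n < N"
  shows "0 \<le> vote_prob P \<sigma> n w \<and> vote_prob P \<sigma> n w \<le> 1"
proof -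
  have "0 \<le> \<sigma> n s" "\<sigma> n s \<le> 1" for s using assms(3,4) unfolding valid_profile_def by auto
  then have "P Sh w * \<sigma> n Sh \<le> P Sh w" "P Sl w * \<sigma> n Sl \<le> P Sl w"
    "0 \<le> P Sh w * \<sigma> n Sh" "0 \<le> P Sl w * \<sigma> n Sl"
    using assms(1) by (simp_all add: mult_left_le)
  then show ?thesis unfolding vote_prob_def using assms(2)[of w] by linarith
qed

lemma lamA_eq_pb_expect:
  "lamA N \<mu> P \<sigma> w = pb_expect {..<N} (\<lambda>n. vote_prob P \<sigma> n w) (\<lambda>c. if \<mu> * real N \<le> real c then 1 else 0)"
proof -
  have "{S. S \<subseteq> {..<N} \<and> real (card S) \<ge> \<mu> * real N} = Pow {..<N} \<inter> {S. \<mu> * real N \<le> real (card S)}"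
    by auto
  then show ?thesis
    unfolding lamA_def pb_expect_def pb_weight_def by (simp add: sum.inter_restrict) (auto intro: sum.cong)
qed

lemma lamA_bounds:
  assumes "\<And>s w. 0 \<le> P s w" "\<And>w. P Sh w + P Sl w = 1" "valid_profile N \<sigma>"
  shows "0 \<le> lamA N \<mu> P \<sigma> w" "lamA N \<mu> P \<sigma> w \<le> 1"
proof -
  let ?p = "\<lambda>n. vote_prob P \<sigma> n w"
  have p: "\<And>n. n \<in> {..<N} \<Longrightarrow> 0 \<le> ?p n \<and> ?p n \<le> 1" using vote_prob_bounds[of P N \<sigma> _ w, OF assms] by simp
  have "pb_expect {..<N} ?p (\<lambda>_. 0) \<le> lamA N \<mu> P \<sigma> w" "lamA N \<mu> P \<sigma> w \<le> pb_expect {..<N} ?p (\<lambda>_. 1)"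
    unfolding lamA_eq_pb_expect by (intro pb_expect_mono[OF p]; simp)+
  then show "0 \<le> lamA N \<mu> P \<sigma> w" "lamA N \<mu> P \<sigma> w \<le> 1" by (simp_all add: pb_expect_const)
qed

lemma lamA_mono:
  assumes "\<And>s w. 0 \<le> P s w" "\<And>w. P Sh w + P Sl w = 1" "valid_profile N \<sigma>" "valid_profile N \<sigma>'"
    and "\<And>n s. n < N \<Longrightarrow> \<sigma>' n s \<le> \<sigma> n s"
  shows "lamA N \<mu> P \<sigma>' w \<le> lamA N \<mu> P \<sigma> w"
  unfolding lamA_eq_pb_expect
proof (rule pb_expect_mono_prob)
  fix n assume n: "n \<in> {..<N}"
  have "vote_prob P \<sigma>' n w \<le> vote_prob P \<sigma> n w"
    unfolding vote_prob_def using assms(1,5) n by (auto intro!: add_mono mult_left_mono)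
  then show "0 \<le> vote_prob P \<sigma>' n w \<and> vote_prob P \<sigma>' n w \<le> vote_prob P \<sigma> n w \<and> vote_prob P \<sigma> n w \<le> 1"
    using vote_prob_bounds[of P N \<sigma> _ w, OF assms(1,2,3)] vote_prob_bounds[of P N \<sigma>' _ w, OF assms(1,2,4)] n by auto
qed (auto simp: mono_def)

text \<open>Chebyshev's inequality for the number of Accept votes; its variance is at most \<open>N\<close>.\<close>

lemma one_minus_lamA_le_of_vote_sum_ge:
  assumes "\<And>s w. 0 \<le> P s w" "\<And>w. P Sh w + P Sl w = 1" "valid_profile N \<sigma>"
    and "d > 0" "\<mu> * real N + d \<le> (\<Sum>n<N. vote_prob P \<sigma> n w)"
  shows "1 - lamA N \<mu> P \<sigma> w \<le> real N / d\<^sup>2"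
proof -
  let ?p = "\<lambda>n. vote_prob P \<sigma> n w"
  have p: "\<And>n. n \<in> {..<N} \<Longrightarrow> 0 \<le> ?p n \<and> ?p n \<le> 1" using vote_prob_bounds[of P N \<sigma> _ w, OF assms(1-3)] by simp
  have "(\<lambda>c. if \<mu> * real N \<le> real c then 0 else 1) = (\<lambda>c. 1 - (if \<mu> * real N \<le> real c then 1 else 0::real))"
    by auto
  then have "1 - lamA N \<mu> P \<sigma> w = pb_expect {..<N} ?p (\<lambda>c. if \<mu> * real N \<le> real c then 0 else 1)"
    unfolding lamA_eq_pb_expect by (simp add: pb_expect_diff pb_expect_const)
  then have "d\<^sup>2 * (1 - lamA N \<mu> P \<sigma> w) = pb_expect {..<N} ?p (\<lambda>c. d\<^sup>2 * (if \<mu> * real N \<le> real c then 0 else 1))"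
    by (simp add: pb_expect_cmult)
  also have "\<dots> \<le> (\<Sum>n<N. ?p n * (1 - ?p n))"
  proof (rule pb_expect_le_variance[OF _ p])
    fix c
    have "d\<^sup>2 \<le> ((\<Sum>n<N. ?p n) - real c)\<^sup>2" if "real c < \<mu> * real N"
      using that assms(4,5) by (intro power_mono) auto
    then show "d\<^sup>2 * (if \<mu> * real N \<le> real c then 0 else 1) \<le> (real c - (\<Sum>n<N. ?p n))\<^sup>2"
      by (auto simp: power2_commute)
  qed simp
  also have "\<dots> \<le> (\<Sum>n<N. 1)"
    using p by (intro sum_mono) (simp add: mult_le_one)
  finally show ?thesis using assms(4) by (simp add: field_simps)
qed

lemma lamA_le_of_vote_sum_le:
  assumes "\<And>s w. 0 \<le> P s w" "\<And>w. P Sh w + P Sl w = 1" "valid_profile N \<sigma>"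
    and "d > 0" "(\<Sum>n<N. vote_prob P \<sigma> n w) \<le> \<mu> * real N - d"
  shows "lamA N \<mu> P \<sigma> w \<le> real N / d\<^sup>2"
proof -
  let ?p = "\<lambda>n. vote_prob P \<sigma> n w"
  have p: "\<And>n. n \<in> {..<N} \<Longrightarrow> 0 \<le> ?p n \<and> ?p n \<le> 1" using vote_prob_bounds[of P N \<sigma> _ w, OF assms(1-3)] by simp
  have "d\<^sup>2 * lamA N \<mu> P \<sigma> w = pb_expect {..<N} ?p (\<lambda>c. d\<^sup>2 * (if \<mu> * real N \<le> real c then 1 else 0))"
    unfolding lamA_eq_pb_expect by (simp add: pb_expect_cmult)
  also have "\<dots> \<le> (\<Sum>n<N. ?p n * (1 - ?p n))"
  proof (rule pb_expect_le_variance[OF _ p])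
    fix c
    show "d\<^sup>2 * (if \<mu> * real N \<le> real c then 1 else 0) \<le> (real c - (\<Sum>n<N. ?p n))\<^sup>2"
      using assms(4,5) by (auto intro!: power_mono)
  qed simp
  also have "\<dots> \<le> (\<Sum>n<N. 1)"
    using p by (intro sum_mono) (simp add: mult_le_one)
  finally show ?thesis using assms(4) by (simp add: field_simps)
qed

lemma mult_le_bound:
  fixes x a d c :: real
  assumes "x \<le> a" "0 \<le> a" "0 \<le> d" "d \<le> c"
  shows "x * d \<le> a * c"
proof (cases "0 \<le> x")
  case True
  then show ?thesis using assms by (intro mult_mono) auto
next
  case False
  then have "x * d \<le> 0" using assms(3) by (simp add: mult_nonpos_nonneg)
  also have "0 \<le> a * c" using assms by simp
  finally show ?thesis .
qed

lemma contingent_gain_bound: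
  fixes X Y a b c dL dH :: real
  assumes "- a \<le> X" "Y \<le> b" "0 \<le> a" "0 \<le> b"
    and "- c \<le> dL" "dL \<le> 0" "0 \<le> dH" "dH \<le> c"
  shows "X * dL + Y * dH \<le> c * (a + b)"
proof -
  have "(- X) * (- dL) \<le> a * c" "Y * dH \<le> b * c"
    using assms by (intro mult_le_bound; simp)+
  then show ?thesis by (simp add: algebra_simps)
qed

text \<open>A friendly agent (\<open>1 \<le> dL < dH\<close>) can profit from a rise \<open>X > 0\<close> of the acceptance
  probability in state \<open>L\<close> only if some other coalition member with \<open>dL' \<le> -1\<close> weakly gains too.
  If \<open>dH' \<ge> 0\<close>, that member's gain caps \<open>X\<close> by \<open>b c\<close>; if \<open>dH' < 0\<close>, it forces \<open>X + Y < 0\<close>,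
  so the friendly agent loses.\<close>
lemma friendly_gain_bound:
  fixes X Y b c dL dH :: real
  assumes "Y \<le> b" "0 \<le> b" "1 \<le> dL" "dL < dH" "dH \<le> c"
    and partner: "0 < X \<Longrightarrow> \<exists>dL' dH'. dL' \<le> -1 \<and> dL' < dH' \<and> dH' \<le> c \<and> 0 \<le> X * dL' + Y * dH'"
  shows "X * dL + Y * dH \<le> (c + c * c) * b"
proof -
  have Y_bound: "Y * d \<le> b * c" if "0 \<le> d" "d \<le> c" for d
    using assms(1,2) that by (rule mult_le_bound)
  have bc: "0 \<le> b * c" "0 \<le> b * c * c" "(c + c * c) * b = b * c + b * c * c"
    using assms by (simp_all add: algebra_simps)
  show ?thesis
  proof (cases "0 < X")
    case False
    then have "X * dL \<le> 0" using assms(3) by (simp add: mult_nonpos_nonneg)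
    then show ?thesis using Y_bound[of dH] assms bc by linarith
  next
    case True
    then obtain dL' dH' where partner: "dL' \<le> -1" "dL' < dH'" "dH' \<le> c" "0 \<le> X * dL' + Y * dH'"
      using assms(6) by blast
    show ?thesis
    proof (cases "0 \<le> dH'")
      case True
      have "X * 1 \<le> X * (- dL')" using \<open>0 < X\<close> partner(1) by (intro mult_left_mono) auto
      then have "X \<le> X * (- dL')" by simp
      also have "\<dots> \<le> Y * dH'" using partner(4) by simp
      also have "\<dots> \<le> b * c" using Y_bound True partner(3) by blast
      finally have "X * dL \<le> b * c * c"
        using \<open>0 < X\<close> assms by (intro mult_le_bound) auto
      then show ?thesis using Y_bound[of dH] assms bc by linarith
    next
      case False
      have "X * dL' < X * dH'" using \<open>0 < X\<close> partner(2) by simp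
      then have "0 < (X + Y) * dH'" using partner(4) by (simp add: algebra_simps)
      then have "X + Y < 0" using False by (simp add: zero_less_mult_iff)
      moreover have "X * dL < X * dH" using \<open>0 < X\<close> assms(4) by simp
      moreover have "(X + Y) * dH < 0" using \<open>X + Y < 0\<close> assms(3,4) by (simp add: mult_neg_pos)
      ultimately have "X * dL + Y * dH < 0" by (simp add: algebra_simps)
      then show ?thesis using bc by linarith
    qed
  qed
qed

definition utility_gap :: "(state \<Rightarrow> outcome \<Rightarrow> nat) \<Rightarrow> state \<Rightarrow> real" where
  "utility_gap u w = real (u w Acc) - real (u w Rej)"

lemma exp_util_diff:
  "exp_util N \<mu> pr P u \<sigma>' - exp_util N \<mu> pr P u \<sigma> =
     pr L * (lamA N \<mu> P \<sigma>' L - lamA N \<mu> P \<sigma> L) * utility_gap u L +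
     pr H * (lamA N \<mu> P \<sigma>' H - lamA N \<mu> P \<sigma> H) * utility_gap u H"
  unfolding exp_util_def lamR_def utility_gap_def by (simp add: algebra_simps)

lemma friendly_utility_gap:
  assumes "friendly u" "\<And>w a. u w a \<le> B"
  shows "1 \<le> utility_gap u L" "utility_gap u L < utility_gap u H" "utility_gap u H \<le> real B"
  using assms(1) assms(2)[of H Acc] unfolding friendly_def utility_gap_def by linarith+

lemma unfriendly_utility_gap:
  assumes "unfriendly u" "\<And>w a. u w a \<le> B"
  shows "- real B \<le> utility_gap u L" "utility_gap u L < utility_gap u H" "utility_gap u H \<le> -1"
  using assms(1) assms(2)[of L Rej] unfolding unfriendly_def utility_gap_def by linarith+

lemma contingent_utility_gap:
  assumes "contingent u" "\<And>w a. u w a \<le> B"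
  shows "- real B \<le> utility_gap u L" "utility_gap u L \<le> -1"
    "1 \<le> utility_gap u H" "utility_gap u H \<le> real B"
  using assms(1) assms(2)[of L Rej] assms(2)[of H Acc] unfolding contingent_def utility_gap_def
  by linarith+

lemma friendly_coalition_lamA_le:
  assumes "\<And>s w. 0 \<le> P s w" "\<And>w. P Sh w + P Sl w = 1"
    and "regular N v \<sigma>" "valid_profile N \<sigma>'" "\<forall>n<N. n \<notin> D \<longrightarrow> \<sigma>' n = \<sigma> n"
    and "\<forall>n\<in>D. friendly (v n)"
  shows "lamA N \<mu> P \<sigma>' w \<le> lamA N \<mu> P \<sigma> w"
proof (rule lamA_mono[OF assms(1,2) _ assms(4)])
  show "valid_profile N \<sigma>" using assms(3) unfolding regular_def by simp
  then show "\<sigma>' n s \<le> \<sigma> n s" if "n < N" for n s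
    using assms(3-6) that unfolding regular_def valid_profile_def by (cases "n \<in> D") auto
qed

lemma unfriendly_coalition_lamA_ge:
  assumes "\<And>s w. 0 \<le> P s w" "\<And>w. P Sh w + P Sl w = 1"
    and "regular N v \<sigma>" "valid_profile N \<sigma>'" "\<forall>n<N. n \<notin> D \<longrightarrow> \<sigma>' n = \<sigma> n"
    and "\<forall>n\<in>D. unfriendly (v n)"
  shows "lamA N \<mu> P \<sigma> w \<le> lamA N \<mu> P \<sigma>' w"
proof (rule lamA_mono[OF assms(1,2) assms(4)])
  show "valid_profile N \<sigma>" using assms(3) unfolding regular_def by simp
  then show "\<sigma> n s \<le> \<sigma>' n s" if "n < N" for n s
    using assms(3-6) that unfolding regular_def valid_profile_def by (cases "n \<in> D") auto
qed

locale coalition_deviation =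
  fixes N :: nat and \<mu> :: real and pr :: "state \<Rightarrow> real" and P :: "signal \<Rightarrow> state \<Rightarrow> real"
    and B :: nat and \<alpha>F \<alpha>U :: real and v :: "nat \<Rightarrow> state \<Rightarrow> outcome \<Rightarrow> nat"
    and \<sigma> \<sigma>' :: "nat \<Rightarrow> signal \<Rightarrow> real" and D :: "nat set"
  assumes prior: "0 \<le> pr L" "0 \<le> pr H" "pr L + pr H = 1"
    and signal: "\<And>s w. 0 \<le> P s w" "\<And>w. P Sh w + P Sl w = 1"
    and inst: "is_instance N B \<alpha>F \<alpha>U v" and reg: "regular N v \<sigma>"
    and coalition: "D \<subseteq> {..<N}" and valid': "valid_profile N \<sigma>'"
    and outside: "\<forall>n<N. n \<notin> D \<longrightarrow> \<sigma>' n = \<sigma> n"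
    and weak: "\<forall>m\<in>D. exp_util N \<mu> pr P (v m) \<sigma> \<le> exp_util N \<mu> pr P (v m) \<sigma>'"
begin

definition "X = pr L * (lamA N \<mu> P \<sigma>' L - lamA N \<mu> P \<sigma> L)"
definition "Y = pr H * (lamA N \<mu> P \<sigma>' H - lamA N \<mu> P \<sigma> H)"
definition "a = pr L * lamA N \<mu> P \<sigma> L"
definition "b = pr H * (1 - lamA N \<mu> P \<sigma> H)"

abbreviation "dL m \<equiv> utility_gap (v m) L"
abbreviation "dH m \<equiv> utility_gap (v m) H"

lemma gain_eq: "exp_util N \<mu> pr P (v m) \<sigma>' - exp_util N \<mu> pr P (v m) \<sigma> = X * dL m + Y * dH m"
  unfolding exp_util_diff X_def Y_def by simp

lemma shift_bounds: "- a \<le> X" "Y \<le> b" "0 \<le> a" "0 \<le> b" "a + b = 1 - fidelity N \<mu> pr P \<sigma>"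
proof -
  have "valid_profile N \<sigma>" using reg unfolding regular_def by simp
  then show "- a \<le> X" "Y \<le> b" "0 \<le> a" "0 \<le> b" "a + b = 1 - fidelity N \<mu> pr P \<sigma>"
    using lamA_bounds[where P=P and \<mu>=\<mu>, OF signal] valid' prior
    unfolding X_def Y_def a_def b_def fidelity_def lamR_def
    by (auto simp: algebra_simps mult_left_mono mult_left_le)
qed

lemma member_bounded: "m \<in> D \<Longrightarrow> v m w c \<le> B"
  using inst coalition unfolding is_instance_def by auto

lemma member_type: "m \<in> D \<Longrightarrow> friendly (v m) \<or> unfriendly (v m) \<or> contingent (v m)"
  using inst coalition unfolding is_instance_def by auto

lemma member_gain_nonneg: "m \<in> D \<Longrightarrow> 0 \<le> X * dL m + Y * dH m"
  using weak gain_eq[of m] by auto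

lemma X_nonpos_if_all_friendly: "\<forall>m\<in>D. friendly (v m) \<Longrightarrow> X \<le> 0"
  using friendly_coalition_lamA_le[where P=P and \<mu>=\<mu>, OF signal reg valid' outside] prior(1)
  unfolding X_def by (simp add: mult_nonneg_nonpos)

lemma Y_nonneg_if_all_unfriendly: "\<forall>m\<in>D. unfriendly (v m) \<Longrightarrow> 0 \<le> Y"
  using unfriendly_coalition_lamA_ge[where P=P and \<mu>=\<mu>, OF signal reg valid' outside] prior(2)
  unfolding Y_def by simp

lemma friendly_member_gain_le:
  assumes "n \<in> D" "friendly (v n)"
  shows "X * dL n + Y * dH n \<le> (real B + real B * real B) * b"
proof (rule friendly_gain_bound[OF shift_bounds(2,4) friendly_utility_gap[OF assms(2) member_bounded[OF assms(1)]]])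
  assume "0 < X"
  then obtain m where m: "m \<in> D" "unfriendly (v m) \<or> contingent (v m)"
    using X_nonpos_if_all_friendly member_type by fastforce
  then have "dL m \<le> -1 \<and> dL m < dH m \<and> dH m \<le> real B"
    using unfriendly_utility_gap[OF _ member_bounded[OF m(1)]]
      contingent_utility_gap[OF _ member_bounded[OF m(1)]] by fastforce
  then show "\<exists>dL' dH'. dL' \<le> -1 \<and> dL' < dH' \<and> dH' \<le> real B \<and> 0 \<le> X * dL' + Y * dH'"
    using member_gain_nonneg[OF m(1)] by blast
qed

text \<open>The symmetry \<open>(X, Y, dL, dH, a, b) \<mapsto> (-Y, -X, -dH, -dL, b, a)\<close> turns unfriendly
  agents into friendly ones.\<close>
lemma unfriendly_member_gain_le:
  assumes "n \<in> D" "unfriendly (v n)"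
  shows "X * dL n + Y * dH n \<le> (real B + real B * real B) * a"
proof -
  note gaps = unfriendly_utility_gap[OF assms(2) member_bounded[OF assms(1)]]
  have "(- Y) * (- dH n) + (- X) * (- dL n) \<le> (real B + real B * real B) * a"
  proof (rule friendly_gain_bound)
    assume "0 < - Y"
    then obtain m where m: "m \<in> D" "friendly (v m) \<or> contingent (v m)"
      using Y_nonneg_if_all_unfriendly member_type by fastforce
    then have "- dH m \<le> -1 \<and> - dH m < - dL m \<and> - dL m \<le> real B"
      using friendly_utility_gap[OF _ member_bounded[OF m(1)]]
        contingent_utility_gap[OF _ member_bounded[OF m(1)]] by fastforce
    then show "\<exists>dL' dH'. dL' \<le> -1 \<and> dL' < dH' \<and> dH' \<le> real B \<and> 0 \<le> (- Y) * dL' + (- X) * dH'"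
      using member_gain_nonneg[OF m(1)] by (intro exI[of _ "- dH m"] exI[of _ "- dL m"]) auto
  qed (use shift_bounds gaps in auto)
  then show ?thesis by simp
qed

lemma contingent_member_gain_le:
  assumes "n \<in> D" "contingent (v n)"
  shows "X * dL n + Y * dH n \<le> real B * (a + b)"
  using contingent_utility_gap[OF assms(2) member_bounded[OF assms(1)]] shift_bounds
  by (intro contingent_gain_bound) auto

lemma member_gain_le:
  assumes "n \<in> D"
  shows "exp_util N \<mu> pr P (v n) \<sigma>' - exp_util N \<mu> pr P (v n) \<sigma>
           \<le> (real B + real B * real B) * (1 - fidelity N \<mu> pr P \<sigma>)"
proof -
  let ?c = "real B + real B * real B"
  have "?c * b \<le> ?c * (a + b)" "?c * a \<le> ?c * (a + b)" "real B * (a + b) \<le> ?c * (a + b)"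
    using shift_bounds by (intro mult_left_mono mult_right_mono; simp)+
  then have "X * dL n + Y * dH n \<le> ?c * (a + b)"
    using member_type[OF assms] friendly_member_gain_le[OF assms] unfriendly_member_gain_le[OF assms]
      contingent_member_gain_le[OF assms] by (elim disjE) (blast intro: order_trans)+
  then show ?thesis using gain_eq shift_bounds(5) by simp
qed

end

lemma regular_profile_strong_BNE:
  assumes "0 \<le> pr L" "0 \<le> pr H" "pr L + pr H = 1"
    and "\<And>s w. 0 \<le> P s w" "\<And>w. P Sh w + P Sl w = 1"
    and "is_instance N B \<alpha>F \<alpha>U v" "regular N v \<sigma>"
  shows "strong_BNE N \<mu> pr P v \<sigma> ((real B + real B * real B) * (1 - fidelity N \<mu> pr P \<sigma>))"
  unfolding strong_BNE_def
proof clarify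
  fix D \<sigma>' n
  assume dev: "D \<subseteq> {..<N}" "valid_profile N \<sigma>'" "\<forall>n<N. n \<notin> D \<longrightarrow> \<sigma>' n = \<sigma> n"
    "\<forall>m\<in>D. exp_util N \<mu> pr P (v m) \<sigma> \<le> exp_util N \<mu> pr P (v m) \<sigma>'" "n \<in> D"
    "exp_util N \<mu> pr P (v n) \<sigma> + (real B + real B * real B) * (1 - fidelity N \<mu> pr P \<sigma>)
       < exp_util N \<mu> pr P (v n) \<sigma>'"
  interpret coalition_deviation N \<mu> pr P B \<alpha>F \<alpha>U v \<sigma> \<sigma>' D
    using assms dev by unfold_locales auto
  show False using dev member_gain_le[of n] by linarith
qed

lemma exists_separating_mix:
  fixes pl ph t :: real
  assumes "0 \<le> pl" "pl < ph" "ph \<le> 1" "0 < t" "t < 1"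
  shows "\<exists>x y d. 0 \<le> x \<and> x \<le> 1 \<and> 0 \<le> y \<and> y \<le> 1 \<and> 0 < d \<and>
           t + d \<le> ph * x + (1 - ph) * y \<and> pl * x + (1 - pl) * y \<le> t - d"
proof -
  define z where "z = min t (1 - t)"
  define y where "y = t - z * (ph + pl) / 2"
  define d where "d = z * (ph - pl) / 2"
  have z: "0 < z" "z \<le> t" "z \<le> 1 - t" using assms unfolding z_def by auto
  have "z * (ph + pl) / 2 \<le> z" "0 \<le> z * (ph + pl) / 2"
    using z assms by (simp_all add: mult_left_le)
  then have "0 \<le> y + z" "y + z \<le> 1" "0 \<le> y" "y \<le> 1"
    using z unfolding y_def by linarith+
  moreover have "0 < d" unfolding d_def using z assms by simp
  moreover have "ph * (y + z) + (1 - ph) * y = t + d" "pl * (y + z) + (1 - pl) * y = t - d"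
    unfolding y_def d_def by (simp_all add: field_simps)
  ultimately show ?thesis by (intro exI[of _ "y + z"] exI[of _ y] exI[of _ d]) auto
qed

text \<open>The contingent agents, a fraction \<open>1 - \<alpha>F - \<alpha>U\<close> of all agents, can steer the vote
  to the informed majority decision: this needs an Accept rate above
  \<open>(\<mu> - \<alpha>F) / (1 - \<alpha>F - \<alpha>U) \<in> (0, 1)\<close> in state \<open>H\<close> and below it in state \<open>L\<close>.\<close>
lemma exists_informed_contingent_strategy:
  fixes \<mu> \<alpha>F \<alpha>U :: real and P :: "signal \<Rightarrow> state \<Rightarrow> real"
  assumes "0 \<le> \<alpha>F" "0 \<le> \<alpha>U" "\<alpha>F < \<mu>" "\<alpha>U < 1 - \<mu>"
    and "0 \<le> P Sh L" "P Sh L < P Sh H" "P Sh H \<le> 1" "\<And>w. P Sh w + P Sl w = 1"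
  shows "\<exists>x y \<delta>\<^sub>0. 0 \<le> x \<and> x \<le> 1 \<and> 0 \<le> y \<and> y \<le> 1 \<and> 0 < \<delta>\<^sub>0 \<and>
           \<mu> + \<delta>\<^sub>0 \<le> \<alpha>F + (1 - \<alpha>F - \<alpha>U) * (P Sh H * x + P Sl H * y) \<and>
           \<alpha>F + (1 - \<alpha>F - \<alpha>U) * (P Sh L * x + P Sl L * y) \<le> \<mu> - \<delta>\<^sub>0"
proof -
  define \<alpha>C where "\<alpha>C = 1 - \<alpha>F - \<alpha>U"
  have \<alpha>C: "0 < \<alpha>C" using assms unfolding \<alpha>C_def by simp
  have "0 < (\<mu> - \<alpha>F) / \<alpha>C" "(\<mu> - \<alpha>F) / \<alpha>C < 1"
    using \<alpha>C assms unfolding \<alpha>C_def by (simp_all add: field_simps)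
  then obtain x y d where xy: "0 \<le> x" "x \<le> 1" "0 \<le> y" "y \<le> 1" "0 < d"
    and H: "(\<mu> - \<alpha>F) / \<alpha>C + d \<le> P Sh H * x + P Sl H * y"
    and L: "P Sh L * x + P Sl L * y \<le> (\<mu> - \<alpha>F) / \<alpha>C - d"
    using exists_separating_mix[OF assms(5-7)] assms(8)[of H, symmetric] assms(8)[of L, symmetric]
    by (metis add_diff_cancel_left')
  have "\<alpha>C * ((\<mu> - \<alpha>F) / \<alpha>C + d) \<le> \<alpha>C * (P Sh H * x + P Sl H * y)"
    "\<alpha>C * (P Sh L * x + P Sl L * y) \<le> \<alpha>C * ((\<mu> - \<alpha>F) / \<alpha>C - d)"
    using H L \<alpha>C by (simp_all add: mult_left_mono)
  moreover have "\<alpha>C * ((\<mu> - \<alpha>F) / \<alpha>C + d) = \<mu> - \<alpha>F + \<alpha>C * d"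
    "\<alpha>C * ((\<mu> - \<alpha>F) / \<alpha>C - d) = \<mu> - \<alpha>F - \<alpha>C * d"
    using \<alpha>C by (simp_all add: field_simps)
  ultimately have "\<mu> + \<alpha>C * d \<le> \<alpha>F + \<alpha>C * (P Sh H * x + P Sl H * y)"
    "\<alpha>F + \<alpha>C * (P Sh L * x + P Sl L * y) \<le> \<mu> - \<alpha>C * d"
    by simp_all
  moreover have "0 < \<alpha>C * d" using \<alpha>C xy by simp
  ultimately show ?thesis
    using xy unfolding \<alpha>C_def by (intro exI[of _ x] exI[of _ y] exI[of _ "(1 - \<alpha>F - \<alpha>U) * d"]) auto
qed

definition contingent_deviation ::
    "(nat \<Rightarrow> state \<Rightarrow> outcome \<Rightarrow> nat) \<Rightarrow> (nat \<Rightarrow> signal \<Rightarrow> real) \<Rightarrow> real \<Rightarrow> real \<Rightarrow> nat \<Rightarrow> signal \<Rightarrow> real" where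
  "contingent_deviation v \<sigma> x y n = (if contingent (v n) then (\<lambda>s. case s of Sh \<Rightarrow> x | Sl \<Rightarrow> y) else \<sigma> n)"

lemma valid_contingent_deviation:
  "valid_profile N \<sigma> \<Longrightarrow> 0 \<le> x \<Longrightarrow> x \<le> 1 \<Longrightarrow> 0 \<le> y \<Longrightarrow> y \<le> 1 \<Longrightarrow>
     valid_profile N (contingent_deviation v \<sigma> x y)"
  unfolding valid_profile_def contingent_deviation_def by (auto split: signal.split)

lemma sum_indicator_eq_card:
  fixes N :: nat and c :: real
  shows "(\<Sum>n<N. if Q n then c else 0) = c * real (card {n. n < N \<and> Q n})"
proof -
  have "{n \<in> {..<N}. Q n} = {n. n < N \<and> Q n}" by auto
  then show ?thesis using sum.inter_filter[of "{..<N}" "\<lambda>_. c" Q] by (simp add: mult.commute)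
qed

lemma vote_sum_contingent_deviation:
  assumes "\<And>w. P Sh w + P Sl w = 1" "is_instance N B \<alpha>F \<alpha>U v" "regular N v \<sigma>"
  shows "(\<Sum>n<N. vote_prob P (contingent_deviation v \<sigma> x y) n w)
           = real (card {n. n < N \<and> friendly (v n)})
             + (P Sh w * x + P Sl w * y) * real (card {n. n < N \<and> contingent (v n)})"
proof -
  have "vote_prob P (contingent_deviation v \<sigma> x y) n w
          = (if friendly (v n) then 1 else 0) + (if contingent (v n) then P Sh w * x + P Sl w * y else 0)"
    if "n < N" for n
    using assms that unfolding is_instance_def regular_def vote_prob_def contingent_deviation_def
      friendly_def unfriendly_def contingent_def
    by auto
  then show ?thesis by (simp add: sum.distrib sum_indicator_eq_card)
qed

lemma card_types_sum:
  assumes "is_instance N B \<alpha>F \<alpha>U v"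
  shows "card {n. n < N \<and> friendly (v n)} + card {n. n < N \<and> unfriendly (v n)}
           + card {n. n < N \<and> contingent (v n)} = N"
proof -
  have "(if friendly (v n) then 1 else 0) + (if unfriendly (v n) then 1 else 0)
          + (if contingent (v n) then 1 else 0) = (1 :: real)" if "n < N" for n
    using assms that unfolding is_instance_def friendly_def unfriendly_def contingent_def by auto
  then have "real N = (\<Sum>n<N. (if friendly (v n) then 1 else 0) + (if unfriendly (v n) then 1 else 0)
                                + (if contingent (v n) then 1 else 0))"
    by simp
  also have "\<dots> = real (card {n. n < N \<and> friendly (v n)} + card {n. n < N \<and> unfriendly (v n)}
                        + card {n. n < N \<and> contingent (v n)})"
    unfolding sum.distrib sum_indicator_eq_card by simp
  finally show ?thesis by linarith
qed

lemma real_nat_floor_bounds: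
  "0 \<le> x \<Longrightarrow> x - 1 < real (nat \<lfloor>x\<rfloor>) \<and> real (nat \<lfloor>x\<rfloor>) \<le> x"
  using floor_correct[of x] by auto

lemma contingent_deviation_vote_mean:
  fixes N :: nat and P :: "signal \<Rightarrow> state \<Rightarrow> real" and v :: "nat \<Rightarrow> state \<Rightarrow> outcome \<Rightarrow> nat"
    and \<sigma> :: "nat \<Rightarrow> signal \<Rightarrow> real" and x y :: real
  defines "\<sigma>' \<equiv> contingent_deviation v \<sigma> x y"
  assumes signal: "\<And>s w. 0 \<le> P s w" "\<And>w. P Sh w + P Sl w = 1"
    and fractions: "0 \<le> \<alpha>F" "0 \<le> \<alpha>U"
    and inst: "is_instance N B \<alpha>F \<alpha>U v" and reg: "regular N v \<sigma>"
    and xy: "0 \<le> x" "x \<le> 1" "0 \<le> y" "y \<le> 1"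
    and hH: "\<mu> + \<delta>\<^sub>0 \<le> \<alpha>F + (1 - \<alpha>F - \<alpha>U) * (P Sh H * x + P Sl H * y)"
    and hL: "\<alpha>F + (1 - \<alpha>F - \<alpha>U) * (P Sh L * x + P Sl L * y) \<le> \<mu> - \<delta>\<^sub>0"
    and large: "2 \<le> real N * \<delta>\<^sub>0"
  shows "\<mu> * real N + real N * \<delta>\<^sub>0 / 2 \<le> (\<Sum>n<N. vote_prob P \<sigma>' n H)"
    and "(\<Sum>n<N. vote_prob P \<sigma>' n L) \<le> \<mu> * real N - real N * \<delta>\<^sub>0 / 2"
proof -
  define q where "q w = P Sh w * x + P Sl w * y" for w
  define nF where "nF = real (card {n. n < N \<and> friendly (v n)})"
  define nU where "nU = real (card {n. n < N \<and> unfriendly (v n)})"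
  define nC where "nC = real (card {n. n < N \<and> contingent (v n)})"
  have partition: "real N = nF + nU + nC"
    using card_types_sum[OF inst] unfolding nF_def nU_def nC_def by simp
  have sum_eq: "(\<Sum>n<N. vote_prob P \<sigma>' n w) = (1 - q w) * nF + q w * (real N - nU)" for w
  proof -
    have "(\<Sum>n<N. vote_prob P \<sigma>' n w) = nF + q w * nC"
      using vote_sum_contingent_deviation[where P=P and x=x and y=y and w=w, OF signal(2) inst reg]
      unfolding \<sigma>'_def q_def nF_def nC_def by simp
    then show ?thesis unfolding partition by (simp add: algebra_simps)
  qed
  have nF: "\<alpha>F * real N - 1 < nF" "nF \<le> \<alpha>F * real N"
    and nU: "\<alpha>U * real N - 1 < nU" "nU \<le> \<alpha>U * real N"
    using inst real_nat_floor_bounds fractions unfolding is_instance_def nF_def nU_def by auto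
  have q: "0 \<le> q w" "q w \<le> 1" for w
    using mult_left_le[OF xy(2) signal(1)[of Sh w]] mult_left_le[OF xy(4) signal(1)[of Sl w]]
      signal(1)[of Sh w] signal(1)[of Sl w] signal(2)[of w] xy
    unfolding q_def by (simp_all add: add_mono)
  have "(1 - q H) * (\<alpha>F * real N - 1) \<le> (1 - q H) * nF" "q H * (real N - \<alpha>U * real N) \<le> q H * (real N - nU)"
    "real N * (\<mu> + \<delta>\<^sub>0) \<le> real N * (\<alpha>F + (1 - \<alpha>F - \<alpha>U) * q H)"
    using q nF nU hH unfolding q_def by (intro mult_left_mono; simp)+
  then show "\<mu> * real N + real N * \<delta>\<^sub>0 / 2 \<le> (\<Sum>n<N. vote_prob P \<sigma>' n H)"
    using sum_eq[of H] q[of H] large by (simp add: algebra_simps)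
  have "(1 - q L) * nF \<le> (1 - q L) * (\<alpha>F * real N)" "q L * (real N - nU) \<le> q L * (real N - \<alpha>U * real N + 1)"
    "real N * (\<alpha>F + (1 - \<alpha>F - \<alpha>U) * q L) \<le> real N * (\<mu> - \<delta>\<^sub>0)"
    using q nF nU hL unfolding q_def by (intro mult_left_mono; simp)+
  then show "(\<Sum>n<N. vote_prob P \<sigma>' n L) \<le> \<mu> * real N - real N * \<delta>\<^sub>0 / 2"
    using sum_eq[of L] q[of L] large by (simp add: algebra_simps)
qed

lemma diff_mult_lower_bound:
  fixes p p' \<eta> g c :: real
  assumes "0 \<le> p" "0 \<le> p'" "p' \<le> \<eta>" "1 \<le> g" "g \<le> c"
  shows "p - \<eta> * c \<le> (p - p') * g"
proof -
  have "p * 1 \<le> p * g" using assms by (intro mult_left_mono) auto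
  moreover have "p' * g \<le> \<eta> * c" using assms by (intro mult_mono) auto
  ultimately show ?thesis by (simp add: algebra_simps)
qed

lemma contingent_gain_ge_of_tails:
  assumes prior: "0 \<le> pr L" "0 \<le> pr H" "pr L + pr H = 1"
    and signal: "\<And>s w. 0 \<le> P s w" "\<And>w. P Sh w + P Sl w = 1"
    and valid: "valid_profile N \<sigma>" "valid_profile N \<sigma>'"
    and u: "contingent u" "\<And>w a. u w a \<le> B"
    and tails: "1 - lamA N \<mu> P \<sigma>' H \<le> \<eta>" "lamA N \<mu> P \<sigma>' L \<le> \<eta>"
  shows "1 - fidelity N \<mu> pr P \<sigma> - \<eta> * real B \<le> exp_util N \<mu> pr P u \<sigma>' - exp_util N \<mu> pr P u \<sigma>"
proof -
  note gaps = contingent_utility_gap[OF u]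
  note bounds = lamA_bounds[where P=P and \<mu>=\<mu>, OF signal]
  have "lamA N \<mu> P \<sigma> L - \<eta> * real B
          \<le> (lamA N \<mu> P \<sigma> L - lamA N \<mu> P \<sigma>' L) * (- utility_gap u L)"
    using bounds valid tails gaps by (intro diff_mult_lower_bound) auto
  moreover have "(1 - lamA N \<mu> P \<sigma> H) - \<eta> * real B
          \<le> ((1 - lamA N \<mu> P \<sigma> H) - (1 - lamA N \<mu> P \<sigma>' H)) * utility_gap u H"
    using bounds valid tails gaps by (intro diff_mult_lower_bound) auto
  ultimately have "pr L * (lamA N \<mu> P \<sigma> L - \<eta> * real B) + pr H * ((1 - lamA N \<mu> P \<sigma> H) - \<eta> * real B)
      \<le> pr L * ((lamA N \<mu> P \<sigma> L - lamA N \<mu> P \<sigma>' L) * (- utility_gap u L))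
        + pr H * (((1 - lamA N \<mu> P \<sigma> H) - (1 - lamA N \<mu> P \<sigma>' H)) * utility_gap u H)"
    using prior by (intro add_mono mult_left_mono) auto
  also have "\<dots> = exp_util N \<mu> pr P u \<sigma>' - exp_util N \<mu> pr P u \<sigma>"
    unfolding exp_util_diff by (simp add: algebra_simps)
  finally have "pr L * (lamA N \<mu> P \<sigma> L - \<eta> * real B) + pr H * ((1 - lamA N \<mu> P \<sigma> H) - \<eta> * real B)
      \<le> exp_util N \<mu> pr P u \<sigma>' - exp_util N \<mu> pr P u \<sigma>" .
  moreover have "pr H = 1 - pr L" using prior(3) by simp
  ultimately show ?thesis unfolding fidelity_def lamR_def \<open>pr H = 1 - pr L\<close> by (simp add: algebra_simps)
qed

lemma not_strong_BNE_if_all_gain: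
  assumes "D \<subseteq> {..<N}" "D \<noteq> {}" "valid_profile N \<sigma>'" "\<forall>n<N. n \<notin> D \<longrightarrow> \<sigma>' n = \<sigma> n" "0 \<le> \<epsilon>"
    and gain: "\<And>n. n \<in> D \<Longrightarrow> exp_util N \<mu> pr P (v n) \<sigma> + \<epsilon> < exp_util N \<mu> pr P (v n) \<sigma>'"
  shows "\<not> strong_BNE N \<mu> pr P v \<sigma> \<epsilon>"
proof -
  have "\<forall>n\<in>D. exp_util N \<mu> pr P (v n) \<sigma> \<le> exp_util N \<mu> pr P (v n) \<sigma>'"
    using gain assms(5) by (fastforce intro: less_imp_le add_increasing2)
  moreover have "\<exists>n\<in>D. exp_util N \<mu> pr P (v n) \<sigma> + \<epsilon> < exp_util N \<mu> pr P (v n) \<sigma>'"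
    using gain assms(2) by blast
  ultimately show ?thesis unfolding strong_BNE_def using assms(1,3,4) by blast
qed

lemma low_fidelity_not_strong_BNE:
  assumes prior: "0 \<le> pr L" "0 \<le> pr H" "pr L + pr H = 1"
    and signal: "\<And>s w. 0 \<le> P s w" "\<And>w. P Sh w + P Sl w = 1"
    and fractions: "0 \<le> \<alpha>F" "0 \<le> \<alpha>U"
    and inst: "is_instance N B \<alpha>F \<alpha>U v" and reg: "regular N v \<sigma>"
    and xy: "0 \<le> x" "x \<le> 1" "0 \<le> y" "y \<le> 1"
    and hH: "\<mu> + \<delta>\<^sub>0 \<le> \<alpha>F + (1 - \<alpha>F - \<alpha>U) * (P Sh H * x + P Sl H * y)"
    and hL: "\<alpha>F + (1 - \<alpha>F - \<alpha>U) * (P Sh L * x + P Sl L * y) \<le> \<mu> - \<delta>\<^sub>0"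
    and large: "2 \<le> real N * \<delta>\<^sub>0" "8 * real B \<le> \<delta> * \<delta>\<^sub>0\<^sup>2 * real N"
    and low: "0 < \<delta>" "fidelity N \<mu> pr P \<sigma> \<le> 1 - \<delta>"
  shows "\<not> strong_BNE N \<mu> pr P v \<sigma> (\<delta> / 4)"
proof -
  define \<sigma>' where "\<sigma>' = contingent_deviation v \<sigma> x y"
  define D where "D = {n. n < N \<and> contingent (v n)}"
  define \<eta> where "\<eta> = real N / (real N * \<delta>\<^sub>0 / 2)\<^sup>2"
  have valid: "valid_profile N \<sigma>" using reg unfolding regular_def by simp
  have valid': "valid_profile N \<sigma>'"
    unfolding \<sigma>'_def using valid xy by (rule valid_contingent_deviation)
  note mean = contingent_deviation_vote_mean[where P=P and \<mu>=\<mu>, OF signal fractions inst reg xy hH hL large(1),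
      folded \<sigma>'_def]
  have d: "0 < real N * \<delta>\<^sub>0 / 2" using large(1) by simp
  then have N: "0 < real N" "0 < \<delta>\<^sub>0" by (simp_all add: zero_less_mult_iff)
  have tails: "1 - lamA N \<mu> P \<sigma>' H \<le> \<eta>" "lamA N \<mu> P \<sigma>' L \<le> \<eta>"
    unfolding \<eta>_def using mean
    by (intro one_minus_lamA_le_of_vote_sum_ge[where P=P, OF signal valid' d] lamA_le_of_vote_sum_le[where P=P, OF signal valid' d]; simp)+
  have "\<eta> * real B \<le> \<delta> / 2"
    using large(2) N unfolding \<eta>_def by (simp add: field_simps power2_eq_square)
  then have gain: "exp_util N \<mu> pr P (v n) \<sigma> + \<delta> / 4 < exp_util N \<mu> pr P (v n) \<sigma>'" if "n \<in> D" for n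
  proof -
    have "contingent (v n)" "\<And>w a. v n w a \<le> B"
      using that inst unfolding D_def is_instance_def by auto
    from contingent_gain_ge_of_tails[where P=P and \<mu>=\<mu>, OF prior signal valid valid' this tails]
    show ?thesis using low \<open>\<eta> * real B \<le> \<delta> / 2\<close> by linarith
  qed
  have "D \<noteq> {}"
  proof
    assume "D = {}"
    then have "(\<Sum>n<N. vote_prob P \<sigma>' n H) = (\<Sum>n<N. vote_prob P \<sigma>' n L)"
      using vote_sum_contingent_deviation[where P=P, OF signal(2) inst reg] unfolding \<sigma>'_def D_def by simp
    then show False using mean d by linarith
  qed
  moreover have "D \<subseteq> {..<N}" "\<forall>n<N. n \<notin> D \<longrightarrow> \<sigma>' n = \<sigma> n"
    unfolding D_def \<sigma>'_def contingent_deviation_def by auto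
  ultimately show ?thesis
    using valid' low(1) gain by (intro not_strong_BNE_if_all_gain) auto
qed

lemma fidelity_le_one:
  assumes "0 \<le> pr L" "0 \<le> pr H" "pr L + pr H = 1"
    and "\<And>s w. 0 \<le> P s w" "\<And>w. P Sh w + P Sl w = 1" "valid_profile N \<sigma>"
  shows "fidelity N \<mu> pr P \<sigma> \<le> 1"
proof -
  have "pr L * (1 - lamA N \<mu> P \<sigma> L) \<le> pr L" "pr H * lamA N \<mu> P \<sigma> H \<le> pr H"
    using lamA_bounds[where P=P and \<mu>=\<mu>, OF assms(4-6)] assms(1,2) by (simp_all add: mult_left_le)
  then show ?thesis using assms(3) unfolding fidelity_def lamR_def by linarith
qed

lemma eventually_le_mult_real: "0 < c \<Longrightarrow> \<forall>\<^sub>F N in sequentially. a \<le> c * real N"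
  using filterlim_real_sequentially unfolding filterlim_at_top
  by (auto elim!: eventually_mono[OF spec[of _ "a / c"]] simp: field_simps)

lemma frequently_le_one_minus_of_not_tendsto:
  fixes f :: "nat \<Rightarrow> real"
  assumes "\<And>n. f n \<le> 1" "\<not> f \<longlonglongrightarrow> 1"
  shows "\<exists>\<delta>>0. \<exists>\<^sub>F n in sequentially. f n \<le> 1 - \<delta>"
proof -
  obtain \<delta> where "0 < \<delta>" and "\<exists>\<^sub>F n in sequentially. \<not> dist (f n) 1 < \<delta>"
    using assms(2) unfolding tendsto_iff not_all not_imp not_eventually by blast
  then show ?thesis
    using assms(1) by (intro exI[of _ \<delta>]) (auto elim!: frequently_elim1 simp: dist_real_def)
qed

lemma frequently_not_strong_BNE:
  assumes prior: "0 \<le> pr L" "0 \<le> pr H" "pr L + pr H = 1"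
    and signal: "\<And>s w. 0 \<le> P s w" "\<And>w. P Sh w + P Sl w = 1" "P Sh L < P Sh H"
    and fractions: "0 \<le> \<alpha>F" "0 \<le> \<alpha>U" "\<alpha>F < \<mu>" "\<alpha>U < 1 - \<mu>"
    and inst: "\<And>N. is_instance N B \<alpha>F \<alpha>U (v N)" and reg: "\<And>N. regular N (v N) (\<Sigma> N)"
    and low: "0 < \<delta>" "\<exists>\<^sub>F N in sequentially. fidelity N \<mu> pr P (\<Sigma> N) \<le> 1 - \<delta>"
  shows "\<exists>\<^sub>F N in sequentially. \<not> strong_BNE N \<mu> pr P (v N) (\<Sigma> N) (\<delta> / 4)"
proof -
  obtain x y \<delta>\<^sub>0 where strategy: "0 \<le> x" "x \<le> 1" "0 \<le> y" "y \<le> 1" "0 < \<delta>\<^sub>0"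
    "\<mu> + \<delta>\<^sub>0 \<le> \<alpha>F + (1 - \<alpha>F - \<alpha>U) * (P Sh H * x + P Sl H * y)"
    "\<alpha>F + (1 - \<alpha>F - \<alpha>U) * (P Sh L * x + P Sl L * y) \<le> \<mu> - \<delta>\<^sub>0"
    using exists_informed_contingent_strategy[OF fractions signal(1) signal(3) _ signal(2)]
      signal(1)[of Sl H] signal(2)[of H] by fastforce
  have "\<forall>\<^sub>F N in sequentially. 2 \<le> real N * \<delta>\<^sub>0 \<and> 8 * real B \<le> \<delta> * \<delta>\<^sub>0\<^sup>2 * real N"
    using eventually_le_mult_real[of \<delta>\<^sub>0 2] eventually_le_mult_real[of "\<delta> * \<delta>\<^sub>0\<^sup>2" "8 * real B"]
      strategy(5) low(1) by (auto simp: mult.commute intro: eventually_conj)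
  with low(2) have "\<exists>\<^sub>F N in sequentially. fidelity N \<mu> pr P (\<Sigma> N) \<le> 1 - \<delta> \<and>
      2 \<le> real N * \<delta>\<^sub>0 \<and> 8 * real B \<le> \<delta> * \<delta>\<^sub>0\<^sup>2 * real N"
    by (rule frequently_eventually_frequently)
  then show ?thesis
    by (rule frequently_elim1)
      (intro low_fidelity_not_strong_BNE[where P=P, OF prior signal(1,2) fractions(1,2) inst reg
          strategy(1-4,6,7)], use low(1) in auto)
qed

theorem theorem2:
  fixes \<mu> \<alpha>F \<alpha>U :: real and B :: nat
    and pr :: "state \<Rightarrow> real" and P :: "signal \<Rightarrow> state \<Rightarrow> real"
    and v :: "nat \<Rightarrow> nat \<Rightarrow> state \<Rightarrow> outcome \<Rightarrow> nat"
    and \<Sigma> :: "nat \<Rightarrow> nat \<Rightarrow> signal \<Rightarrow> real"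
  assumes B_pos: "B > 0"
    and prior: "pr L > 0" "pr H > 0" "pr L + pr H = 1"
    and signal: "\<And>s w. P s w \<ge> 0" "\<And>w. P Sh w + P Sl w = 1" "P Sh H > P Sh L"
    and fractions: "\<alpha>F \<ge> 0" "\<alpha>U \<ge> 0"
    and not_decisive: "\<alpha>F < \<mu>" "\<alpha>U < 1 - \<mu>"
    and inst: "\<And>N. is_instance N B \<alpha>F \<alpha>U (v N)"
    and reg: "\<And>N. regular N (v N) (\<Sigma> N)"
  shows "((\<lambda>N. fidelity N \<mu> pr P (\<Sigma> N)) \<longlonglongrightarrow> 1 \<longrightarrow>
            (\<exists>\<epsilon>::nat \<Rightarrow> real. \<epsilon> \<longlonglongrightarrow> 0 \<and>
               (\<forall>N. strong_BNE N \<mu> pr P (v N) (\<Sigma> N) (\<epsilon> N))))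
       \<and> (\<not> (\<lambda>N. fidelity N \<mu> pr P (\<Sigma> N)) \<longlonglongrightarrow> 1 \<longrightarrow>
            (\<exists>\<epsilon>>0. \<exists>\<^sub>\<infinity>N. \<not> strong_BNE N \<mu> pr P (v N) (\<Sigma> N) \<epsilon>))"
proof -
  let ?fid = "\<lambda>N. fidelity N \<mu> pr P (\<Sigma> N)"
  note prior' = prior(1,2)[THEN less_imp_le] prior(3)
  have "\<exists>\<epsilon>::nat \<Rightarrow> real. \<epsilon> \<longlonglongrightarrow> 0 \<and> (\<forall>N. strong_BNE N \<mu> pr P (v N) (\<Sigma> N) (\<epsilon> N))"
    if "?fid \<longlonglongrightarrow> 1"
  proof -
    from tendsto_diff[OF tendsto_const[of 1] that] have "(\<lambda>N. 1 - ?fid N) \<longlonglongrightarrow> 0" by simp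
    then have "(\<lambda>N. (real B + real B * real B) * (1 - ?fid N)) \<longlonglongrightarrow> 0"
      by (rule tendsto_mult_right_zero)
    then show ?thesis using regular_profile_strong_BNE[where P=P, OF prior' signal(1,2) inst reg] by blast
  qed
  moreover have "\<exists>\<epsilon>>0. \<exists>\<^sub>\<infinity>N. \<not> strong_BNE N \<mu> pr P (v N) (\<Sigma> N) \<epsilon>" if nlim: "\<not> ?fid \<longlonglongrightarrow> 1"
  proof -
    have "?fid N \<le> 1" for N
      using fidelity_le_one[where P=P, OF prior' signal(1,2)] reg unfolding regular_def by blast
    then obtain \<delta> where "0 < \<delta>" "\<exists>\<^sub>F N in sequentially. ?fid N \<le> 1 - \<delta>"
      using frequently_le_one_minus_of_not_tendsto[of ?fid] nlim by blast
    then have "\<exists>\<^sub>F N in sequentially. \<not> strong_BNE N \<mu> pr P (v N) (\<Sigma> N) (\<delta> / 4)"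
      by (intro frequently_not_strong_BNE[where P=P, OF prior' signal fractions not_decisive inst reg])
    then show ?thesis
      unfolding cofinite_eq_sequentially using \<open>0 < \<delta>\<close> by (intro exI[of _ "\<delta> / 4"]) auto
  qed
  ultimately show ?thesis by blast
qed

end
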